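(* Let $k_1^*,\dots,k_F^*\in\mathbb R^D$ be orthonormal, $(k_f^* )^\top k_{f'}^*=\delta_{f,f'}$, and let $P_\theta$ be a distribution on $\mathbb R^F$ with finite support $\{\theta^1,\dots,\theta^H\}$. Generate $(X,y)$ by $\epsilon\sim\mathrm{Unif}([L])$, $\theta\sim P_\theta$, $X_\ell\sim\mathcal N(\delta_{\ell,\epsilon}\hat k(\theta),I_D)$ independently, $y=X_\epsilon$, where $\hat k(\theta)=\sum_f\theta_fk_f^*$. Consider the Bayes-softmax attention with $H$ heads, $$\hat y_{k,b}(X)=\sum_{\ell=1}^L\frac{\sum_{h=1}^H\exp(k_h^\top X_\ell+b_h)}{\sum_{\ell'=1}^L\sum_{h'=1}^H\exp(k_{h'}^\top X_{\ell'}+b_{h'})}X_\ell,$$ with parameters $k_h=\hat k(\theta^h)$ and $b_h=-\|\theta^h\|_2^2/2+\log P_\theta(\theta^h)$. Then this estimator achieves the Bayes risk, i.e. its mean squared error $\mathbb E\|y-\hat y_{k,b}(X)\|_2^2$ equals that of the Bayes-optimal estimator $\mathbb E[y\mid X,k^*]$.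
   Context: Fix integers $L,F,D,H\ge1$; $[L]=\{1,\dots,L\}$, $\delta$ is the Kronecker delta. *)

theory Defs
  imports "HOL-Probability.Probability"
begin

text \<open>Vectors in R^n are represented as functions nat => real, indexed by {1..n}.
  An observation X in (R^D)^L is a function nat => nat => real, X l d for
  l in {1..L}, d in {1..D}.\<close>

definition khat :: "nat \<Rightarrow> (nat \<Rightarrow> nat \<Rightarrow> real) \<Rightarrow> (nat \<Rightarrow> real) \<Rightarrow> (nat \<Rightarrow> real)" where
  "khat F kstar th = (\<lambda>d. \<Sum>f=1..F. th f * kstar f d)"

definition sqnorm :: "nat \<Rightarrow> (nat \<Rightarrow> real) \<Rightarrow> real" where
  "sqnorm n v = (\<Sum>i=1..n. (v i)\<^sup>2)"

definition dotp :: "nat \<Rightarrow> (nat \<Rightarrow> real) \<Rightarrow> (nat \<Rightarrow> real) \<Rightarrow> real" where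
  "dotp n u v = (\<Sum>i=1..n. u i * v i)"

definition obs_space :: "nat \<Rightarrow> nat \<Rightarrow> (nat \<Rightarrow> nat \<Rightarrow> real) measure" where
  "obs_space L D = PiM {1..L} (\<lambda>_. PiM {1..D} (\<lambda>_. (borel :: real measure)))"

definition obs_law :: "nat \<Rightarrow> nat \<Rightarrow> nat \<Rightarrow> (nat \<Rightarrow> nat \<Rightarrow> real) \<Rightarrow> nat \<Rightarrow> (nat \<Rightarrow> real)
    \<Rightarrow> (nat \<Rightarrow> nat \<Rightarrow> real) measure" where
  "obs_law L F D kstar e th =
     PiM {1..L} (\<lambda>l. PiM {1..D} (\<lambda>d.
        density lborel (normal_density (if l = e then khat F kstar th d else 0) 1)))"

text \<open>Joint law of (epsilon, X): epsilon ~ Unif([L]), theta ~ P independent,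
  X | (epsilon, theta) ~ obs_law.  (theta is marginalised out; y = X_epsilon.)\<close>
definition data_model :: "nat \<Rightarrow> nat \<Rightarrow> nat \<Rightarrow> (nat \<Rightarrow> nat \<Rightarrow> real) \<Rightarrow> (nat \<Rightarrow> real) pmf
    \<Rightarrow> (nat \<times> (nat \<Rightarrow> nat \<Rightarrow> real)) measure" where
  "data_model L F D kstar P =
     measure_pmf (pair_pmf (pmf_of_set {1..L}) P) \<bind>
       (\<lambda>(e, th). distr (obs_law L F D kstar e th)
                        (count_space UNIV \<Otimes>\<^sub>M obs_space L D) (\<lambda>X. (e, X)))"

definition sigma_X :: "nat \<Rightarrow> nat \<Rightarrow> (nat \<times> (nat \<Rightarrow> nat \<Rightarrow> real)) measure
    \<Rightarrow> (nat \<times> (nat \<Rightarrow> nat \<Rightarrow> real)) measure" where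
  "sigma_X L D M = vimage_algebra (space M) snd (obs_space L D)"

definition bayes_softmax :: "nat \<Rightarrow> nat \<Rightarrow> nat \<Rightarrow> (nat \<Rightarrow> nat \<Rightarrow> real) \<Rightarrow> (nat \<Rightarrow> real)
    \<Rightarrow> (nat \<Rightarrow> nat \<Rightarrow> real) \<Rightarrow> (nat \<Rightarrow> real)" where
  "bayes_softmax L D H kk b X =
     (\<lambda>d. \<Sum>l=1..L.
        ((\<Sum>h=1..H. exp (dotp D (kk h) (X l) + b h)) /
         (\<Sum>l'=1..L. \<Sum>h'=1..H. exp (dotp D (kk h') (X l') + b h'))) * X l d)"

end

(* The data model is a finite mixture: the latent pair (epsilon, theta) takes finitely many
   values, and given it X has a Gaussian density with respect to Lebesgue measure on (R^D)^L.
   In such a model E[f(epsilon, X) | X] is the posterior mean, i.e. the average of f(e, X) over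
   the components weighted by prior times likelihood.  Relative to the centred density, the
   likelihood of the component (e, theta^h) is exp(<khat(theta^h), X_e> - |khat(theta^h)|^2 / 2),
   and orthonormality of the k*_f turns |khat(theta)|^2 into |theta|^2; together with the prior
   weight this is exactly exp(k_h . X_e + b_h).  So the Bayes-softmax attention is a version of
   E[y | X]: the two estimators agree almost surely, hence so do their mean squared errors. *)

theory Submission
  imports Defs
begin

lemma nn_integral_bind_pmf_finite:
  assumes fin: "finite (set_pmf p)"
    and K: "K \<in> measure_pmf p \<rightarrow>\<^sub>M subprob_algebra N"
    and f: "f \<in> borel_measurable N"
  shows "(\<integral>\<^sup>+\<omega>. f \<omega> \<partial>(measure_pmf p \<bind> K)) = (\<Sum>x\<in>set_pmf p. (\<integral>\<^sup>+\<omega>. f \<omega> \<partial>K x) * pmf p x)"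
  by (subst nn_integral_bind[OF f K]) (auto intro!: nn_integral_measure_pmf_finite fin)

lemma
  fixes g :: "'b \<Rightarrow> real"
  assumes fin: "finite (set_pmf p)"
    and K: "\<And>x. K x \<in> space (prob_algebra N)"
    and g[measurable]: "g \<in> borel_measurable N"
    and int: "\<And>x. x \<in> set_pmf p \<Longrightarrow> integrable (K x) g"
  shows integrable_bind_pmf_finite: "integrable (measure_pmf p \<bind> K) g"
    and integral_bind_pmf_finite:
      "(\<integral>\<omega>. g \<omega> \<partial>(measure_pmf p \<bind> K)) = (\<Sum>x\<in>set_pmf p. pmf p x * (\<integral>\<omega>. g \<omega> \<partial>K x))"
proof -
  have K_meas: "K \<in> measure_pmf p \<rightarrow>\<^sub>M subprob_algebra N"
    using K by (auto simp: space_prob_algebra space_subprob_algebra prob_space_imp_subprob_space)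
  have sets_K: "sets (K x) = sets N" for x
    using K[of x] by (auto simp: space_prob_algebra)
  have finite_nn_integral: "(\<integral>\<^sup>+\<omega>. ennreal (f \<omega>) \<partial>K x) < \<infinity>"
    if "x \<in> set_pmf p" and f_le: "\<And>\<omega>. f \<omega> \<le> norm (g \<omega>)" for x f
  proof -
    have "(\<integral>\<^sup>+\<omega>. ennreal (f \<omega>) \<partial>K x) \<le> (\<integral>\<^sup>+\<omega>. norm (g \<omega>) \<partial>K x)"
      by (intro nn_integral_mono ennreal_leI f_le)
    also have "\<dots> < \<infinity>"
      using int[OF that(1)] by (simp add: integrable_iff_bounded)
    finally show ?thesis .
  qed
  show integrable: "integrable (measure_pmf p \<bind> K) g"
  proof (rule integrableI_bounded)
    show "g \<in> borel_measurable (measure_pmf p \<bind> K)"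
      by (subst measurable_cong_sets[OF sets_bind[OF sets_K] refl]) auto
    show "(\<integral>\<^sup>+\<omega>. norm (g \<omega>) \<partial>(measure_pmf p \<bind> K)) < \<infinity>"
      using finite_nn_integral[of _ "\<lambda>\<omega>. norm (g \<omega>)"]
      by (simp add: nn_integral_bind_pmf_finite[OF fin K_meas] ennreal_mult_less_top fin)
  qed
  have enn2real_bind: "enn2real (\<integral>\<^sup>+\<omega>. ennreal (f \<omega>) \<partial>(measure_pmf p \<bind> K)) =
      (\<Sum>x\<in>set_pmf p. pmf p x * enn2real (\<integral>\<^sup>+\<omega>. ennreal (f \<omega>) \<partial>K x))"
    if [measurable]: "f \<in> borel_measurable N" and f_le: "\<And>\<omega>. f \<omega> \<le> norm (g \<omega>)" for f
    using finite_nn_integral[OF _ f_le]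
    by (simp add: nn_integral_bind_pmf_finite[OF fin K_meas] enn2real_sum ennreal_mult_less_top
        enn2real_mult mult.commute)
  have "(\<integral>\<omega>. g \<omega> \<partial>(measure_pmf p \<bind> K)) =
      enn2real (\<integral>\<^sup>+\<omega>. ennreal (g \<omega>) \<partial>(measure_pmf p \<bind> K))
      - enn2real (\<integral>\<^sup>+\<omega>. ennreal (- g \<omega>) \<partial>(measure_pmf p \<bind> K))"
    by (rule real_lebesgue_integral_def[OF integrable])
  also have "\<dots> = (\<Sum>x\<in>set_pmf p. pmf p x *
      (enn2real (\<integral>\<^sup>+\<omega>. ennreal (g \<omega>) \<partial>K x) - enn2real (\<integral>\<^sup>+\<omega>. ennreal (- g \<omega>) \<partial>K x)))"
    by (simp add: enn2real_bind sum_subtractf right_diff_distrib)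
  also have "\<dots> = (\<Sum>x\<in>set_pmf p. pmf p x * (\<integral>\<omega>. g \<omega> \<partial>K x))"
    by (intro sum.cong refl arg_cong2[where f="(*)"] real_lebesgue_integral_def[symmetric] int)
  finally show "(\<integral>\<omega>. g \<omega> \<partial>(measure_pmf p \<bind> K)) = (\<Sum>x\<in>set_pmf p. pmf p x * (\<integral>\<omega>. g \<omega> \<partial>K x))" .
qed

definition mixture_model :: "'a pmf \<Rightarrow> ('a \<Rightarrow> 'e) \<Rightarrow> ('a \<Rightarrow> 'x measure) \<Rightarrow> 'x measure
    \<Rightarrow> ('e \<times> 'x) measure" where
  "mixture_model p lab Q N =
     measure_pmf p \<bind> (\<lambda>a. distr (Q a) (count_space UNIV \<Otimes>\<^sub>M N) (\<lambda>X. (lab a, X)))"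

context
  fixes p :: "'a pmf" and lab :: "'a \<Rightarrow> 'e::countable" and Q :: "'a \<Rightarrow> 'x measure" and N :: "'x measure"
  assumes prob_Q: "\<And>a. prob_space (Q a)" and sets_Q: "\<And>a. sets (Q a) = sets N"
begin

lemma prob_space_mixture_component:
  "prob_space (distr (Q a) (count_space UNIV \<Otimes>\<^sub>M N) (\<lambda>X. (lab a, X)))"
  by (intro prob_space.prob_space_distr prob_Q) (simp add: measurable_cong_sets[OF sets_Q refl])

lemma sets_mixture_model: "sets (mixture_model p lab Q N) = sets (count_space UNIV \<Otimes>\<^sub>M N)"
  by (auto simp: mixture_model_def intro!: sets_bind)

lemma prob_space_mixture_model: "prob_space (mixture_model p lab Q N)"
  unfolding mixture_model_def
  by (rule prob_space_bind'[where M="measure_pmf p" and N="count_space UNIV \<Otimes>\<^sub>M N"])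
     (auto simp: space_prob_algebra measure_pmf.prob_space_axioms prob_space_mixture_component)

lemma
  assumes fin: "finite (set_pmf p)"
    and h_meas[measurable]: "\<And>e. h e \<in> borel_measurable N"
    and int: "\<And>a. a \<in> set_pmf p \<Longrightarrow> integrable (Q a) (h (lab a))"
  shows integrable_mixture_model: "integrable (mixture_model p lab Q N) (\<lambda>\<omega>. h (fst \<omega>) (snd \<omega>))"
    and integral_mixture_model: "(\<integral>\<omega>. h (fst \<omega>) (snd \<omega>) \<partial>mixture_model p lab Q N) =
      (\<Sum>a\<in>set_pmf p. pmf p a * (\<integral>X. h (lab a) X \<partial>Q a))"
proof -
  have pair_meas: "(\<lambda>X. (lab a, X)) \<in> Q a \<rightarrow>\<^sub>M count_space UNIV \<Otimes>\<^sub>M N" for a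
    by (simp add: measurable_cong_sets[OF sets_Q refl])
  have hh_meas: "(\<lambda>\<omega>. h (fst \<omega>) (snd \<omega>)) \<in> borel_measurable (count_space UNIV \<Otimes>\<^sub>M N)"
    by (rule measurable_compose_countable[where g=fst]) auto
  have "integrable (distr (Q a) (count_space UNIV \<Otimes>\<^sub>M N) (\<lambda>X. (lab a, X))) (\<lambda>\<omega>. h (fst \<omega>) (snd \<omega>))"
    if "a \<in> set_pmf p" for a
    using int[OF that] by (simp add: integrable_distr_eq[OF pair_meas hh_meas])
  note bind = integrable_bind_pmf_finite[OF fin _ hh_meas this] integral_bind_pmf_finite[OF fin _ hh_meas this]
  show "integrable (mixture_model p lab Q N) (\<lambda>\<omega>. h (fst \<omega>) (snd \<omega>))"
    using bind(1) by (simp add: mixture_model_def space_prob_algebra prob_space_mixture_component)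
  show "(\<integral>\<omega>. h (fst \<omega>) (snd \<omega>) \<partial>mixture_model p lab Q N) =
      (\<Sum>a\<in>set_pmf p. pmf p a * (\<integral>X. h (lab a) X \<partial>Q a))"
    using bind(2) by (simp add: mixture_model_def space_prob_algebra prob_space_mixture_component
        integral_distr[OF pair_meas hh_meas])
qed

end

context
  fixes p :: "'a pmf" and lab :: "'a \<Rightarrow> 'e::countable" and \<Lambda> N :: "'x measure"
    and \<psi> :: "'a \<Rightarrow> 'x \<Rightarrow> real"
  assumes fin: "finite (set_pmf p)"
    and sets_\<Lambda>: "sets \<Lambda> = sets N"
    and \<psi>_meas[measurable]: "\<And>a. \<psi> a \<in> borel_measurable \<Lambda>"
    and \<psi>_nonneg: "\<And>a X. 0 \<le> \<psi> a X"
    and prob_\<psi>: "\<And>a. prob_space (density \<Lambda> (\<psi> a))"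
begin

lemma integral_mixture_model_density:
  assumes h_meas[measurable]: "\<And>e. h e \<in> borel_measurable N"
    and int: "\<And>a. a \<in> set_pmf p \<Longrightarrow> integrable (density \<Lambda> (\<psi> a)) (h (lab a))"
  shows "(\<integral>\<omega>. h (fst \<omega>) (snd \<omega>) \<partial>mixture_model p lab (\<lambda>a. density \<Lambda> (\<psi> a)) N) =
    (\<integral>X. (\<Sum>a\<in>set_pmf p. pmf p a * \<psi> a X * h (lab a) X) \<partial>\<Lambda>)"
proof -
  have h_meas_\<Lambda>: "h e \<in> borel_measurable \<Lambda>" for e
    by (simp add: measurable_cong_sets[OF sets_\<Lambda> refl])
  have int_\<Lambda>: "integrable \<Lambda> (\<lambda>X. \<psi> a X * h (lab a) X)" if "a \<in> set_pmf p" for a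
    using int[OF that] by (simp add: integrable_density \<psi>_nonneg h_meas_\<Lambda>)
  have "(\<integral>\<omega>. h (fst \<omega>) (snd \<omega>) \<partial>mixture_model p lab (\<lambda>a. density \<Lambda> (\<psi> a)) N) =
      (\<Sum>a\<in>set_pmf p. pmf p a * (\<integral>X. h (lab a) X \<partial>density \<Lambda> (\<psi> a)))"
    using prob_\<psi> sets_\<Lambda> fin int by (intro integral_mixture_model) auto
  also have "\<dots> = (\<Sum>a\<in>set_pmf p. (\<integral>X. pmf p a * \<psi> a X * h (lab a) X \<partial>\<Lambda>))"
    by (simp add: integral_density \<psi>_nonneg h_meas_\<Lambda> mult.assoc)
  also have "\<dots> = (\<integral>X. (\<Sum>a\<in>set_pmf p. pmf p a * \<psi> a X * h (lab a) X) \<partial>\<Lambda>)"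
    using int_\<Lambda> by (intro Bochner_Integration.integral_sum[symmetric]) (simp add: mult.assoc)
  finally show ?thesis .
qed

lemma set_integral_mixture_model_density:
  defines "M \<equiv> mixture_model p lab (\<lambda>a. density \<Lambda> (\<psi> a)) N"
  assumes h_meas[measurable]: "\<And>e. h e \<in> borel_measurable N"
    and h_int: "\<And>a. a \<in> set_pmf p \<Longrightarrow> integrable (density \<Lambda> (\<psi> a)) (h (lab a))"
    and B[measurable]: "B \<in> sets N"
  shows "(\<integral>\<omega>\<in>snd -` B \<inter> space M. h (fst \<omega>) (snd \<omega>) \<partial>M) =
    (\<integral>X. (\<Sum>a\<in>set_pmf p. pmf p a * \<psi> a X * (indicator B X * h (lab a) X)) \<partial>\<Lambda>)"
proof -
  have "integrable (density \<Lambda> (\<psi> a)) (\<lambda>X. indicator B X * h (lab a) X)" if "a \<in> set_pmf p" for a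
    using integrable_mult_indicator[OF _ h_int[OF that], of B] sets_\<Lambda> by simp
  then have "(\<integral>\<omega>. indicator B (snd \<omega>) * h (fst \<omega>) (snd \<omega>) \<partial>M) =
      (\<integral>X. (\<Sum>a\<in>set_pmf p. pmf p a * \<psi> a X * (indicator B X * h (lab a) X)) \<partial>\<Lambda>)"
    unfolding M_def by (intro integral_mixture_model_density[where h="\<lambda>e X. indicator B X * h e X"]) simp
  then show ?thesis
    unfolding set_lebesgue_integral_def
    by (subst Bochner_Integration.integral_cong[OF refl]) (auto split: split_indicator)
qed

lemma cond_exp_mixture_model:
  defines "M \<equiv> mixture_model p lab (\<lambda>a. density \<Lambda> (\<psi> a)) N"
  assumes f_meas[measurable]: "\<And>e. f e \<in> borel_measurable N"
    and f_int: "\<And>a. a \<in> set_pmf p \<Longrightarrow> integrable (density \<Lambda> (\<psi> a)) (f (lab a))"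
    and g_meas[measurable]: "g \<in> borel_measurable N"
    and g_int: "\<And>a. a \<in> set_pmf p \<Longrightarrow> integrable (density \<Lambda> (\<psi> a)) g"
    and posterior_mean: "\<And>X. X \<in> space N \<Longrightarrow>
      (\<Sum>a\<in>set_pmf p. pmf p a * \<psi> a X * f (lab a) X) = (\<Sum>a\<in>set_pmf p. pmf p a * \<psi> a X) * g X"
  shows "AE \<omega> in M. real_cond_exp M (vimage_algebra (space M) snd N) (\<lambda>\<omega>. f (fst \<omega>) (snd \<omega>)) \<omega>
    = g (snd \<omega>)"
proof -
  have prob_Q: "prob_space (density \<Lambda> (\<psi> a))" and sets_Q: "sets (density \<Lambda> (\<psi> a)) = sets N" for a
    using prob_\<psi> sets_\<Lambda> by auto
  note integrable = integrable_mixture_model[where Q="\<lambda>a. density \<Lambda> (\<psi> a)" and lab=lab,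
      OF prob_Q sets_Q fin, folded M_def]
  have sets_M: "sets M = sets (count_space UNIV \<Otimes>\<^sub>M N)"
    unfolding M_def using prob_Q sets_Q by (rule sets_mixture_model)
  have snd_meas: "snd \<in> M \<rightarrow>\<^sub>M N"
    by (simp add: measurable_cong_sets[OF sets_M refl])
  have snd_space: "snd \<in> space M \<rightarrow> space N"
    using measurable_space[OF snd_meas] by blast
  have sets_snd_algebra: "sets (vimage_algebra (space M) snd N) = {snd -` B \<inter> space M | B. B \<in> sets N}"
    by (rule sets_vimage_algebra2[OF snd_space])
  interpret prob_space M
    unfolding M_def using prob_Q sets_Q by (rule prob_space_mixture_model)
  interpret finite_measure_subalgebra M "vimage_algebra (space M) snd N"
    using measurable_sets[OF snd_meas]
    by unfold_locales (auto simp: subalgebra_def sets_snd_algebra)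
  show ?thesis
  proof (rule real_cond_exp_charact)
    show "integrable M (\<lambda>\<omega>. f (fst \<omega>) (snd \<omega>))"
      by (rule integrable[OF f_meas f_int])
    show "integrable M (\<lambda>\<omega>. g (snd \<omega>))"
      by (rule integrable[where h="\<lambda>_. g", OF g_meas g_int])
    show "(\<lambda>\<omega>. g (snd \<omega>)) \<in> borel_measurable (vimage_algebra (space M) snd N)"
      by (rule measurable_compose[OF measurable_vimage_algebra1[OF snd_space] g_meas])
    fix A assume "A \<in> sets (vimage_algebra (space M) snd N)"
    then obtain B where B[measurable]: "B \<in> sets N" and A: "A = snd -` B \<inter> space M"
      unfolding sets_snd_algebra by blast
    have "(\<integral>\<omega>\<in>A. f (fst \<omega>) (snd \<omega>) \<partial>M) =
        (\<integral>X. (\<Sum>a\<in>set_pmf p. pmf p a * \<psi> a X * (indicator B X * f (lab a) X)) \<partial>\<Lambda>)"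
      unfolding A M_def by (rule set_integral_mixture_model_density[OF f_meas f_int B])
    also have "\<dots> = (\<integral>X. (\<Sum>a\<in>set_pmf p. pmf p a * \<psi> a X * (indicator B X * g X)) \<partial>\<Lambda>)"
    proof (intro Bochner_Integration.integral_cong refl)
      fix X assume "X \<in> space \<Lambda>"
      then have "X \<in> space N" using sets_eq_imp_space_eq[OF sets_\<Lambda>] by simp
      then show "(\<Sum>a\<in>set_pmf p. pmf p a * \<psi> a X * (indicator B X * f (lab a) X)) =
          (\<Sum>a\<in>set_pmf p. pmf p a * \<psi> a X * (indicator B X * g X))"
        using posterior_mean[of X]
        by (simp add: sum_distrib_left sum_distrib_right mult.left_commute flip: sum_distrib_left)
    qed
    also have "\<dots> = (\<integral>\<omega>\<in>A. g (snd \<omega>) \<partial>M)"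
      unfolding A M_def by (rule set_integral_mixture_model_density[of "\<lambda>_. g", OF g_meas g_int B, symmetric])
    finally show "(\<integral>\<omega>\<in>A. f (fst \<omega>) (snd \<omega>) \<partial>M) = (\<integral>\<omega>\<in>A. g (snd \<omega>) \<partial>M)" .
  qed
qed

end

lemma PiM_density:
  fixes N :: "'i \<Rightarrow> 'a measure" and f :: "'i \<Rightarrow> 'a \<Rightarrow> real"
  assumes I: "finite I"
    and N: "\<And>i. sigma_finite_measure (N i)"
    and f_meas[measurable]: "\<And>i. i \<in> I \<Longrightarrow> f i \<in> borel_measurable (N i)"
    and f_nonneg: "\<And>i x. 0 \<le> f i x"
    and prob: "\<And>i. prob_space (density (N i) (f i))"
  shows "PiM I (\<lambda>i. density (N i) (f i)) = density (PiM I N) (\<lambda>x. \<Prod>i\<in>I. f i (x i))"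
proof -
  interpret D: product_sigma_finite "\<lambda>i. density (N i) (f i)"
    unfolding product_sigma_finite_def using prob by (auto intro: prob_space_imp_sigma_finite)
  interpret product_sigma_finite N
    unfolding product_sigma_finite_def using N by auto
  show ?thesis
  proof (rule D.PiM_eqI[symmetric, OF I])
    show "sets (density (PiM I N) (\<lambda>x. \<Prod>i\<in>I. f i (x i))) = sets (PiM I (\<lambda>i. density (N i) (f i)))"
      unfolding sets_density by (intro sets_PiM_cong refl) simp
  next
    fix A assume "\<And>i. i \<in> I \<Longrightarrow> A i \<in> sets (density (N i) (f i))"
    then have A[measurable]: "\<And>i. i \<in> I \<Longrightarrow> A i \<in> sets (N i)" by simp
    have "emeasure (density (PiM I N) (\<lambda>x. \<Prod>i\<in>I. f i (x i))) (Pi\<^sub>E I A) =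
        (\<integral>\<^sup>+x. ennreal (\<Prod>i\<in>I. f i (x i)) * indicator (Pi\<^sub>E I A) x \<partial>PiM I N)"
      using I by (intro emeasure_density) (auto intro: sets_PiM_I_finite)
    also have "\<dots> = (\<integral>\<^sup>+x. (\<Prod>i\<in>I. ennreal (f i (x i)) * indicator (A i) (x i)) \<partial>PiM I N)"
    proof (intro nn_integral_cong)
      fix x assume "x \<in> space (PiM I N)"
      then have "x \<in> extensional I" by (auto simp: space_PiM PiE_iff)
      then have "indicator (Pi\<^sub>E I A) x = (\<Prod>i\<in>I. indicator (A i) (x i) :: real)"
        using I by (auto simp: indicator_def PiE_def Pi_iff intro!: prod.neutral)
      then show "ennreal (\<Prod>i\<in>I. f i (x i)) * indicator (Pi\<^sub>E I A) x =
          (\<Prod>i\<in>I. ennreal (f i (x i)) * indicator (A i) (x i))"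
        by (simp add: f_nonneg prod_nonneg prod.distrib prod_ennreal ennreal_mult' flip: ennreal_indicator)
    qed
    also have "\<dots> = (\<Prod>i\<in>I. \<integral>\<^sup>+y. ennreal (f i y) * indicator (A i) y \<partial>N i)"
      by (intro product_nn_integral_prod I) auto
    also have "\<dots> = (\<Prod>i\<in>I. emeasure (density (N i) (f i)) (A i))"
      by (intro prod.cong refl emeasure_density[symmetric]) auto
    finally show "emeasure (density (PiM I N) (\<lambda>x. \<Prod>i\<in>I. f i (x i))) (Pi\<^sub>E I A) =
        (\<Prod>i\<in>I. emeasure (density (N i) (f i)) (A i))" .
  qed
qed

lemma sigma_finite_PiM_lborel:
  assumes "finite I" shows "sigma_finite_measure (PiM I (\<lambda>_. lborel :: real measure))"
  by (intro product_sigma_finite.sigma_finite assms)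
     (simp add: product_sigma_finite_def lborel.sigma_finite_measure_axioms)

lemma PiM_normal_density:
  assumes "finite I"
  shows "PiM I (\<lambda>i. density lborel (normal_density (m i) 1)) =
    density (PiM I (\<lambda>_. lborel)) (\<lambda>x. \<Prod>i\<in>I. normal_density (m i) 1 (x i))"
  by (rule PiM_density)
     (auto simp: assms lborel.sigma_finite_measure_axioms intro!: prob_space_normal_density)

lemma normal_density_shift:
  "normal_density m 1 x = normal_density 0 1 x * exp (m * x - m\<^sup>2 / 2)"
proof -
  have "exp (- (x - m)\<^sup>2 / 2) = exp (- x\<^sup>2 / 2) * exp (m * x - m\<^sup>2 / 2)"
    by (simp add: mult_exp_exp power2_eq_square field_simps)
  then show ?thesis
    by (simp add: normal_density_def)
qed

definition obs_lborel :: "nat \<Rightarrow> nat \<Rightarrow> (nat \<Rightarrow> nat \<Rightarrow> real) measure" where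
  "obs_lborel L D = PiM {1..L} (\<lambda>_. PiM {1..D} (\<lambda>_. lborel))"

definition gauss_obs :: "nat \<Rightarrow> nat \<Rightarrow> (nat \<Rightarrow> nat \<Rightarrow> real) \<Rightarrow> (nat \<Rightarrow> nat \<Rightarrow> real) measure" where
  "gauss_obs L D \<mu> = PiM {1..L} (\<lambda>l. PiM {1..D} (\<lambda>d. density lborel (normal_density (\<mu> l d) 1)))"

definition gauss_obs_pdf :: "nat \<Rightarrow> nat \<Rightarrow> (nat \<Rightarrow> nat \<Rightarrow> real) \<Rightarrow> (nat \<Rightarrow> nat \<Rightarrow> real) \<Rightarrow> real" where
  "gauss_obs_pdf L D \<mu> X = (\<Prod>l\<in>{1..L}. \<Prod>d\<in>{1..D}. normal_density (\<mu> l d) 1 (X l d))"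

lemma sets_obs_lborel: "sets (obs_lborel L D) = sets (obs_space L D)"
  unfolding obs_lborel_def obs_space_def by (intro sets_PiM_cong) auto

lemma sets_gauss_obs: "sets (gauss_obs L D \<mu>) = sets (obs_space L D)"
  unfolding gauss_obs_def obs_space_def by (intro sets_PiM_cong) auto

lemma prob_space_gauss_obs: "prob_space (gauss_obs L D \<mu>)"
  unfolding gauss_obs_def by (intro prob_space_PiM prob_space_normal_density; simp)

lemma gauss_obs_eq_density: "gauss_obs L D \<mu> = density (obs_lborel L D) (gauss_obs_pdf L D \<mu>)"
proof -
  have "gauss_obs L D \<mu> = PiM {1..L} (\<lambda>l. density (PiM {1..D} (\<lambda>_. lborel))
      (\<lambda>x. \<Prod>d\<in>{1..D}. normal_density (\<mu> l d) 1 (x d)))"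
    unfolding gauss_obs_def PiM_normal_density[OF finite_atLeastAtMost] ..
  also have "\<dots> = density (obs_lborel L D) (gauss_obs_pdf L D \<mu>)"
    unfolding obs_lborel_def gauss_obs_pdf_def
  proof (rule PiM_density)
    show "prob_space (density (PiM {1..D} (\<lambda>_. lborel))
        (\<lambda>x. \<Prod>d\<in>{1..D}. normal_density (\<mu> l d) 1 (x d)))" for l
      unfolding PiM_normal_density[OF finite_atLeastAtMost, symmetric]
      by (intro prob_space_PiM prob_space_normal_density; simp)
  qed (auto simp: sigma_finite_PiM_lborel prod_nonneg)
  finally show ?thesis .
qed

lemma integrable_gauss_obs_coord:
  assumes l: "l \<in> {1..L}" and d: "d \<in> {1..D}"
  shows "integrable (gauss_obs L D \<mu>) (\<lambda>X. X l d)"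
proof -
  let ?N = "\<lambda>l. PiM {1..D} (\<lambda>d. density lborel (normal_density (\<mu> l d) 1))"
  have row_meas: "(\<lambda>X. X l) \<in> gauss_obs L D \<mu> \<rightarrow>\<^sub>M ?N l"
    unfolding gauss_obs_def by (rule measurable_component_singleton[OF l])
  have entry_meas: "(\<lambda>x. x d) \<in> ?N l \<rightarrow>\<^sub>M density lborel (normal_density (\<mu> l d) 1)"
    by (rule measurable_component_singleton[OF d])
  have "sets (density lborel (normal_density (\<mu> l d) 1)) = sets borel"
    by simp
  then have entry_borel: "(\<lambda>x. x d) \<in> borel_measurable (?N l)"
    using entry_meas measurable_cong_sets[OF refl] by blast
  have row_distr: "distr (gauss_obs L D \<mu>) (?N l) (\<lambda>X. X l) = ?N l"
    unfolding gauss_obs_def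
    by (rule distr_PiM_component[OF _ l]) (intro prob_space_PiM prob_space_normal_density; simp)
  have entry_distr: "distr (?N l) (density lborel (normal_density (\<mu> l d) 1)) (\<lambda>x. x d) =
      density lborel (normal_density (\<mu> l d) 1)"
    by (rule distr_PiM_component[OF prob_space_normal_density d]; simp)
  have id_meas: "(\<lambda>x. x) \<in> borel_measurable (density lborel (normal_density (\<mu> l d) 1))"
    by (rule measurable_ident_sets) simp
  have "integrable (distr (?N l) (density lborel (normal_density (\<mu> l d) 1)) (\<lambda>x. x d)) (\<lambda>x. x)"
    unfolding entry_distr by (simp add: integrable_density integrable_normal_moment_nz_1)
  then have "integrable (distr (gauss_obs L D \<mu>) (?N l) (\<lambda>X. X l)) (\<lambda>x. x d)"
    unfolding row_distr integrable_distr_eq[OF entry_meas id_meas] .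
  then show ?thesis
    unfolding integrable_distr_eq[OF row_meas entry_borel] .
qed

lemma measurable_obs_coord[measurable]: "(\<lambda>X. X l d) \<in> borel_measurable (obs_space L D)"
proof (cases "l \<in> {1..L}")
  case l: True
  show ?thesis
  proof (cases "d \<in> {1..D}")
    case True
    then show ?thesis
      unfolding obs_space_def
      by (rule measurable_compose[OF measurable_component_singleton[OF l] measurable_component_singleton])
  next
    case False
    then have undef: "X l d = undefined" if "X \<in> space (obs_space L D)" for X
      using that l by (auto simp: obs_space_def space_PiM PiE_iff extensional_def)
    show ?thesis
      by (subst measurable_cong[where g="\<lambda>_. undefined"]) (auto simp: undef)
  qed
next
  case False
  then have undef: "X l d = undefined d" if "X \<in> space (obs_space L D)" for X
    using that by (auto simp: obs_space_def space_PiM PiE_iff extensional_def)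
  show ?thesis
    by (subst measurable_cong[where g="\<lambda>_. undefined d"]) (auto simp: undef)
qed

lemma gauss_obs_pdf_shift:
  assumes e: "e \<in> {1..L}"
  shows "gauss_obs_pdf L D (\<lambda>l d. if l = e then k d else 0) X =
    gauss_obs_pdf L D (\<lambda>_ _. 0) X * exp (dotp D k (X e) - sqnorm D k / 2)"
proof -
  have "gauss_obs_pdf L D (\<lambda>l d. if l = e then k d else 0) X =
      gauss_obs_pdf L D (\<lambda>_ _. 0) X * exp (\<Sum>l\<in>{1..L}. \<Sum>d\<in>{1..D}.
        (if l = e then k d else 0) * X l d - (if l = e then k d else 0)\<^sup>2 / 2)"
    unfolding gauss_obs_pdf_def by (subst normal_density_shift) (simp add: prod.distrib exp_sum)
  also have "(\<Sum>l\<in>{1..L}. \<Sum>d\<in>{1..D}. (if l = e then k d else 0) * X l d - (if l = e then k d else 0)\<^sup>2 / 2)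
      = (\<Sum>d\<in>{1..D}. k d * X e d - (k d)\<^sup>2 / 2)"
  proof -
    have "(\<Sum>d\<in>{1..D}. (if l = e then k d else 0) * X l d - (if l = e then k d else 0)\<^sup>2 / 2) =
        (if l = e then (\<Sum>d\<in>{1..D}. k d * X e d - (k d)\<^sup>2 / 2) else 0)" for l
      by simp
    then show ?thesis
      using e by (simp add: sum.delta)
  qed
  also have "\<dots> = dotp D k (X e) - sqnorm D k / 2"
    unfolding dotp_def sqnorm_def by (simp add: sum_subtractf sum_divide_distrib)
  finally show ?thesis .
qed

definition attn_score :: "nat \<Rightarrow> nat \<Rightarrow> (nat \<Rightarrow> nat \<Rightarrow> real) \<Rightarrow> (nat \<Rightarrow> real) \<Rightarrow> (nat \<Rightarrow> real) \<Rightarrow> real" where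
  "attn_score D H kk b x = (\<Sum>h=1..H. exp (dotp D (kk h) x + b h))"

lemma attn_score_nonneg: "0 \<le> attn_score D H kk b x"
  unfolding attn_score_def by (simp add: sum_nonneg)

lemma attn_score_pos: "H \<ge> 1 \<Longrightarrow> 0 < attn_score D H kk b x"
  unfolding attn_score_def by (intro sum_pos) auto

lemma bayes_softmax_eq_weighted_mean:
  "bayes_softmax L D H kk b X d =
    (\<Sum>l=1..L. attn_score D H kk b (X l) * X l d) / (\<Sum>l=1..L. attn_score D H kk b (X l))"
  unfolding bayes_softmax_def attn_score_def by (simp flip: sum_divide_distrib)

lemma abs_bayes_softmax_le: "\<bar>bayes_softmax L D H kk b X d\<bar> \<le> (\<Sum>l=1..L. \<bar>X l d\<bar>)"
proof -
  let ?w = "\<lambda>l. attn_score D H kk b (X l)"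
  let ?Z = "\<Sum>l=1..L. ?w l"
  have "\<bar>\<Sum>l=1..L. ?w l * X l d\<bar> \<le> (\<Sum>l=1..L. ?Z * \<bar>X l d\<bar>)"
  proof (rule order_trans[OF sum_abs sum_mono])
    fix l assume "l \<in> {1..L}"
    then have "?w l \<le> ?Z"
      by (intro member_le_sum) (auto simp: attn_score_nonneg)
    then show "\<bar>?w l * X l d\<bar> \<le> ?Z * \<bar>X l d\<bar>"
      by (simp add: abs_mult attn_score_nonneg mult_right_mono)
  qed
  moreover have "0 \<le> ?Z"
    by (simp add: sum_nonneg attn_score_nonneg)
  ultimately show ?thesis
    by (cases "?Z = 0")
       (simp_all add: bayes_softmax_eq_weighted_mean abs_divide pos_divide_le_eq mult.commute
          sum_distrib_right)
qed

lemma measurable_bayes_softmax[measurable]: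
  "(\<lambda>X. bayes_softmax L D H kk b X d) \<in> borel_measurable (obs_space L D)"
  unfolding bayes_softmax_def dotp_def by measurable

lemma integrable_gauss_obs_bayes_softmax:
  assumes d: "d \<in> {1..D}"
  shows "integrable (gauss_obs L D \<mu>) (\<lambda>X. bayes_softmax L D H kk b X d)"
proof (rule Bochner_Integration.integrable_bound)
  show "integrable (gauss_obs L D \<mu>) (\<lambda>X. \<Sum>l=1..L. \<bar>X l d\<bar>)"
    using d by (intro Bochner_Integration.integrable_sum integrable_abs integrable_gauss_obs_coord) auto
  show "AE X in gauss_obs L D \<mu>. norm (bayes_softmax L D H kk b X d) \<le> norm (\<Sum>l=1..L. \<bar>X l d\<bar>)"
    by (intro AE_I2) (simp only: real_norm_def abs_sum_abs abs_bayes_softmax_le)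
  show "(\<lambda>X. bayes_softmax L D H kk b X d) \<in> borel_measurable (gauss_obs L D \<mu>)"
    unfolding measurable_cong_sets[OF sets_gauss_obs refl] by (rule measurable_bayes_softmax)
qed

lemma sqnorm_khat:
  assumes orthonormal: "\<forall>f\<in>{1..F}. \<forall>f'\<in>{1..F}. dotp D (kstar f) (kstar f') = (if f = f' then 1 else 0)"
  shows "sqnorm D (khat F kstar th) = sqnorm F th"
proof -
  have "sqnorm D (khat F kstar th) =
      (\<Sum>d\<in>{1..D}. \<Sum>f\<in>{1..F}. \<Sum>f'\<in>{1..F}. th f * th f' * (kstar f d * kstar f' d))"
    unfolding sqnorm_def khat_def power2_eq_square by (simp add: sum_product algebra_simps)
  also have "\<dots> = (\<Sum>f\<in>{1..F}. \<Sum>f'\<in>{1..F}. th f * th f' * dotp D (kstar f) (kstar f'))"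
    unfolding dotp_def sum_distrib_left
    by (subst sum.swap, rule sum.cong[OF refl], subst sum.swap, simp add: mult_ac)
  also have "\<dots> = (\<Sum>f\<in>{1..F}. th f * th f)"
  proof (rule sum.cong[OF refl])
    fix f assume f: "f \<in> {1..F}"
    have "(\<Sum>f'\<in>{1..F}. th f * th f' * dotp D (kstar f) (kstar f')) =
        (\<Sum>f'\<in>{1..F}. if f = f' then th f * th f else 0)"
      using orthonormal f by (intro sum.cong) auto
    then show "(\<Sum>f'\<in>{1..F}. th f * th f' * dotp D (kstar f) (kstar f')) = th f * th f"
      using f by (simp add: sum.delta)
  qed
  finally show ?thesis
    unfolding sqnorm_def by (simp add: power2_eq_square)
qed

definition obs_mean :: "nat \<Rightarrow> (nat \<Rightarrow> nat \<Rightarrow> real) \<Rightarrow> nat \<Rightarrow> (nat \<Rightarrow> real) \<Rightarrow> nat \<Rightarrow> nat \<Rightarrow> real" where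
  "obs_mean F kstar e th = (\<lambda>l d. if l = e then khat F kstar th d else 0)"

lemma obs_law_eq_gauss_obs: "obs_law L F D kstar e th = gauss_obs L D (obs_mean F kstar e th)"
  unfolding obs_law_def gauss_obs_def obs_mean_def by simp

lemma prior_times_gauss_obs_pdf:
  assumes e: "e \<in> {1..L}"
    and orthonormal: "\<forall>f\<in>{1..F}. \<forall>f'\<in>{1..F}. dotp D (kstar f) (kstar f') = (if f = f' then 1 else 0)"
    and pos: "0 < pmf P th"
  shows "pmf P th * gauss_obs_pdf L D (obs_mean F kstar e th) X = gauss_obs_pdf L D (\<lambda>_ _. 0) X
    * exp (dotp D (khat F kstar th) (X e) + (- sqnorm F th / 2 + ln (pmf P th)))"
proof -
  have "exp (dotp D (khat F kstar th) (X e) + (- sqnorm F th / 2 + ln (pmf P th))) =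
      exp (dotp D (khat F kstar th) (X e) - sqnorm F th / 2) * pmf P th"
  proof -
    have "dotp D (khat F kstar th) (X e) + (- sqnorm F th / 2 + ln (pmf P th)) =
        (dotp D (khat F kstar th) (X e) - sqnorm F th / 2) + ln (pmf P th)"
      by simp
    then show ?thesis
      using pos by (simp only: exp_add exp_ln)
  qed
  then show ?thesis
    by (simp add: obs_mean_def gauss_obs_pdf_shift[OF e] sqnorm_khat[OF orthonormal])
qed

lemma prior_likelihood_sum:
  fixes G :: "nat \<Rightarrow> real"
  assumes L: "L \<ge> 1"
    and orthonormal: "\<forall>f\<in>{1..F}. \<forall>f'\<in>{1..F}. dotp D (kstar f) (kstar f') = (if f = f' then 1 else 0)"
    and theta_distinct: "inj_on theta {1..H}"
    and support: "set_pmf P = theta ` {1..H}"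
  defines "pp \<equiv> pair_pmf (pmf_of_set {1..L}) P"
  shows "(\<Sum>a\<in>set_pmf pp. pmf pp a * gauss_obs_pdf L D (obs_mean F kstar (fst a) (snd a)) X * G (fst a)) =
    gauss_obs_pdf L D (\<lambda>_ _. 0) X / L * (\<Sum>e=1..L. attn_score D H (\<lambda>h. khat F kstar (theta h))
      (\<lambda>h. - sqnorm F (theta h) / 2 + ln (pmf P (theta h))) (X e) * G e)"
proof -
  let ?\<psi>\<^sub>0 = "gauss_obs_pdf L D (\<lambda>_ _. 0) X"
  let ?score = "\<lambda>h e. exp (dotp D (khat F kstar (theta h)) (X e) + (- sqnorm F (theta h) / 2 + ln (pmf P (theta h))))"
  let ?t = "\<lambda>a. pmf pp a * gauss_obs_pdf L D (obs_mean F kstar (fst a) (snd a)) X * G (fst a)"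
  have "set_pmf pp = {1..L} \<times> theta ` {1..H}"
    using L support by (auto simp: pp_def)
  then have "(\<Sum>a\<in>set_pmf pp. ?t a) = (\<Sum>e\<in>{1..L}. \<Sum>th\<in>theta ` {1..H}. ?t (e, th))"
    by (simp add: sum.cartesian_product case_prod_beta)
  also have "\<dots> = (\<Sum>e\<in>{1..L}. \<Sum>h\<in>{1..H}. ?t (e, theta h))"
    by (simp only: sum.reindex[OF theta_distinct] comp_def)
  also have "\<dots> = (\<Sum>e\<in>{1..L}. \<Sum>h\<in>{1..H}.
      pmf P (theta h) / L * gauss_obs_pdf L D (obs_mean F kstar e (theta h)) X * G e)"
    by (intro sum.cong refl) (simp add: pp_def pmf_pair)
  also have "\<dots> = (\<Sum>e\<in>{1..L}. \<Sum>h\<in>{1..H}. ?\<psi>\<^sub>0 / L * ?score h e * G e)"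
  proof (intro sum.cong refl)
    fix e h assume "e \<in> {1..L}" "h \<in> {1..H}"
    moreover have "0 < pmf P (theta h)"
      using \<open>h \<in> {1..H}\<close> support by (metis image_eqI pmf_positive)
    ultimately show "pmf P (theta h) / L * gauss_obs_pdf L D (obs_mean F kstar e (theta h)) X * G e =
        ?\<psi>\<^sub>0 / L * ?score h e * G e"
      using prior_times_gauss_obs_pdf[OF _ orthonormal] by (simp add: field_simps)
  qed
  also have "\<dots> = ?\<psi>\<^sub>0 / L * (\<Sum>e=1..L. attn_score D H (\<lambda>h. khat F kstar (theta h))
      (\<lambda>h. - sqnorm F (theta h) / 2 + ln (pmf P (theta h))) (X e) * G e)"
    by (simp add: attn_score_def sum_distrib_left sum_distrib_right mult.assoc)
  finally show ?thesis .
qed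

lemma posterior_mean_eq_bayes_softmax:
  assumes L: "L \<ge> 1" and H: "H \<ge> 1"
    and orthonormal: "\<forall>f\<in>{1..F}. \<forall>f'\<in>{1..F}. dotp D (kstar f) (kstar f') = (if f = f' then 1 else 0)"
    and theta_distinct: "inj_on theta {1..H}"
    and support: "set_pmf P = theta ` {1..H}"
  defines "pp \<equiv> pair_pmf (pmf_of_set {1..L}) P"
  shows "(\<Sum>a\<in>set_pmf pp. pmf pp a * gauss_obs_pdf L D (obs_mean F kstar (fst a) (snd a)) X * X (fst a) d) =
    (\<Sum>a\<in>set_pmf pp. pmf pp a * gauss_obs_pdf L D (obs_mean F kstar (fst a) (snd a)) X)
    * bayes_softmax L D H (\<lambda>h. khat F kstar (theta h)) (\<lambda>h. - sqnorm F (theta h) / 2 + ln (pmf P (theta h))) X d"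
proof -
  let ?w = "\<lambda>e. attn_score D H (\<lambda>h. khat F kstar (theta h))
    (\<lambda>h. - sqnorm F (theta h) / 2 + ln (pmf P (theta h))) (X e)"
  let ?c = "gauss_obs_pdf L D (\<lambda>_ _. 0) X / L"
  note posterior = prior_likelihood_sum[OF L orthonormal theta_distinct support, folded pp_def]
  have "0 < (\<Sum>e=1..L. ?w e)"
    using L by (intro sum_pos attn_score_pos[OF H]) auto
  then have weighted_mean: "(\<Sum>e=1..L. ?w e * X e d) = (\<Sum>e=1..L. ?w e) *
      bayes_softmax L D H (\<lambda>h. khat F kstar (theta h)) (\<lambda>h. - sqnorm F (theta h) / 2 + ln (pmf P (theta h))) X d"
    by (simp add: bayes_softmax_eq_weighted_mean)
  have "(\<Sum>a\<in>set_pmf pp. pmf pp a * gauss_obs_pdf L D (obs_mean F kstar (fst a) (snd a)) X * X (fst a) d) =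
      ?c * (\<Sum>e=1..L. ?w e * X e d)"
    by (rule posterior)
  also have "\<dots> = ?c * (\<Sum>e=1..L. ?w e) *
      bayes_softmax L D H (\<lambda>h. khat F kstar (theta h)) (\<lambda>h. - sqnorm F (theta h) / 2 + ln (pmf P (theta h))) X d"
    by (simp only: weighted_mean mult.assoc)
  also have "?c * (\<Sum>e=1..L. ?w e) =
      (\<Sum>a\<in>set_pmf pp. pmf pp a * gauss_obs_pdf L D (obs_mean F kstar (fst a) (snd a)) X)"
    using posterior[where G="\<lambda>_. 1"] by simp
  finally show ?thesis .
qed

lemma data_model_eq_mixture_model:
  "data_model L F D kstar P = mixture_model (pair_pmf (pmf_of_set {1..L}) P) fst
    (\<lambda>a. density (obs_lborel L D) (gauss_obs_pdf L D (obs_mean F kstar (fst a) (snd a)))) (obs_space L D)"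
  by (simp add: data_model_def mixture_model_def split_beta' obs_law_eq_gauss_obs gauss_obs_eq_density)

lemma sets_data_model:
  "sets (data_model L F D kstar P) = sets (count_space UNIV \<Otimes>\<^sub>M obs_space L D)"
  unfolding data_model_eq_mixture_model
  by (rule sets_mixture_model) (simp_all add: prob_space_gauss_obs sets_gauss_obs flip: gauss_obs_eq_density)

lemma measurable_sample_coord:
  "(\<lambda>\<omega>. snd \<omega> (fst \<omega>) d) \<in> borel_measurable (count_space UNIV \<Otimes>\<^sub>M obs_space L D)"
  by (rule measurable_compose_countable[where g=fst]) auto

lemma bayes_softmax_cond_exp:
  assumes L: "L \<ge> 1" and H: "H \<ge> 1" and d: "d \<in> {1..D}"
    and orthonormal: "\<forall>f\<in>{1..F}. \<forall>f'\<in>{1..F}. dotp D (kstar f) (kstar f') = (if f = f' then 1 else 0)"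
    and theta_distinct: "inj_on theta {1..H}"
    and support: "set_pmf P = theta ` {1..H}"
  defines "M \<equiv> data_model L F D kstar P"
  shows "AE \<omega> in M. real_cond_exp M (sigma_X L D M) (\<lambda>\<omega>. snd \<omega> (fst \<omega>) d) \<omega> =
    bayes_softmax L D H (\<lambda>h. khat F kstar (theta h))
      (\<lambda>h. - sqnorm F (theta h) / 2 + ln (pmf P (theta h))) (snd \<omega>) d"
proof -
  let ?kk = "\<lambda>h. khat F kstar (theta h)"
  let ?b = "\<lambda>h. - sqnorm F (theta h) / 2 + ln (pmf P (theta h))"
  define pp where "pp = pair_pmf (pmf_of_set {1..L}) P"
  define \<psi> where "\<psi> a = gauss_obs_pdf L D (obs_mean F kstar (fst a) (snd a))" for a
  have density_eq: "density (obs_lborel L D) (\<psi> a) = gauss_obs L D (obs_mean F kstar (fst a) (snd a))" for a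
    by (simp add: \<psi>_def gauss_obs_eq_density)
  have M_eq: "M = mixture_model pp fst (\<lambda>a. density (obs_lborel L D) (\<psi> a)) (obs_space L D)"
    unfolding M_def pp_def \<psi>_def by (rule data_model_eq_mixture_model)
  have fst_pp: "fst a \<in> {1..L}" if "a \<in> set_pmf pp" for a
    using that L by (auto simp: pp_def)
  show ?thesis
    unfolding sigma_X_def M_eq
  proof (rule cond_exp_mixture_model[where f="\<lambda>e X. X e d" and g="\<lambda>X. bayes_softmax L D H ?kk ?b X d"])
    show "finite (set_pmf pp)"
      using L support by (simp add: pp_def)
    show "sets (obs_lborel L D) = sets (obs_space L D)"
      by (rule sets_obs_lborel)
    show "\<psi> a \<in> borel_measurable (obs_lborel L D)" for a
      unfolding \<psi>_def gauss_obs_pdf_def measurable_cong_sets[OF sets_obs_lborel refl] by measurable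
    show "0 \<le> \<psi> a X" for a X
      by (simp add: \<psi>_def gauss_obs_pdf_def prod_nonneg)
    show "prob_space (density (obs_lborel L D) (\<psi> a))" for a
      unfolding density_eq by (rule prob_space_gauss_obs)
    show "integrable (density (obs_lborel L D) (\<psi> a)) (\<lambda>X. X (fst a) d)" if "a \<in> set_pmf pp" for a
      unfolding density_eq using fst_pp[OF that] d by (rule integrable_gauss_obs_coord)
    show "integrable (density (obs_lborel L D) (\<psi> a)) (\<lambda>X. bayes_softmax L D H ?kk ?b X d)" for a
      unfolding density_eq using d by (rule integrable_gauss_obs_bayes_softmax)
    show "(\<lambda>X. X e d) \<in> borel_measurable (obs_space L D)" for e
      by measurable
    show "(\<lambda>X. bayes_softmax L D H ?kk ?b X d) \<in> borel_measurable (obs_space L D)"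
      by (rule measurable_bayes_softmax)
    show "(\<Sum>a\<in>set_pmf pp. pmf pp a * \<psi> a X * X (fst a) d) =
        (\<Sum>a\<in>set_pmf pp. pmf pp a * \<psi> a X) * bayes_softmax L D H ?kk ?b X d" for X
      unfolding \<psi>_def pp_def using L H orthonormal theta_distinct support
      by (rule posterior_mean_eq_bayes_softmax)
  qed
qed

theorem proposition6:
  fixes L F D H :: nat
    and kstar :: "nat \<Rightarrow> nat \<Rightarrow> real"
    and P :: "(nat \<Rightarrow> real) pmf"
    and theta :: "nat \<Rightarrow> (nat \<Rightarrow> real)"
  assumes "L \<ge> 1" and "F \<ge> 1" and "D \<ge> 1" and "H \<ge> 1"
    and orthonormal: "\<forall>f\<in>{1..F}. \<forall>f'\<in>{1..F}.
                        dotp D (kstar f) (kstar f') = (if f = f' then 1 else 0)"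
    and theta_in_RF: "\<forall>h\<in>{1..H}. \<forall>f. f \<notin> {1..F} \<longrightarrow> theta h f = 0"
    and theta_distinct: "inj_on theta {1..H}"
    and support: "set_pmf P = theta ` {1..H}"
  shows
    "(let M = data_model L F D kstar P;
          kk = (\<lambda>h. khat F kstar (theta h));
          b = (\<lambda>h. - sqnorm F (theta h) / 2 + ln (pmf P (theta h)))
      in (\<integral>\<omega>. (\<Sum>d=1..D. (snd \<omega> (fst \<omega>) d - bayes_softmax L D H kk b (snd \<omega>) d)\<^sup>2) \<partial>M)
         = (\<integral>\<omega>. (\<Sum>d=1..D. (snd \<omega> (fst \<omega>) d
                 - real_cond_exp M (sigma_X L D M) (\<lambda>\<omega>'. snd \<omega>' (fst \<omega>') d) \<omega>)\<^sup>2) \<partial>M))"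
proof -
  define M where "M = data_model L F D kstar P"
  let ?kk = "\<lambda>h. khat F kstar (theta h)"
  let ?b = "\<lambda>h. - sqnorm F (theta h) / 2 + ln (pmf P (theta h))"
  let ?cond_exp = "\<lambda>d. real_cond_exp M (sigma_X L D M) (\<lambda>\<omega>'. snd \<omega>' (fst \<omega>') d)"
  have "AE \<omega> in M. \<forall>d\<in>{1..D}. ?cond_exp d \<omega> = bayes_softmax L D H ?kk ?b (snd \<omega>) d"
    unfolding M_def using bayes_softmax_cond_exp[OF assms(1,4) _ orthonormal theta_distinct support]
    by (intro eventually_ball_finite) auto
  then have "AE \<omega> in M. (\<Sum>d=1..D. (snd \<omega> (fst \<omega>) d - bayes_softmax L D H ?kk ?b (snd \<omega>) d)\<^sup>2) =
      (\<Sum>d=1..D. (snd \<omega> (fst \<omega>) d - ?cond_exp d \<omega>)\<^sup>2)"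
    by (rule eventually_mono) simp
  moreover have "(\<lambda>\<omega>. snd \<omega> (fst \<omega>) d) \<in> borel_measurable M" for d
    unfolding M_def measurable_cong_sets[OF sets_data_model refl] by (rule measurable_sample_coord)
  moreover have "(\<lambda>\<omega>. bayes_softmax L D H ?kk ?b (snd \<omega>) d) \<in> borel_measurable M" for d
    unfolding M_def measurable_cong_sets[OF sets_data_model refl]
    by (rule measurable_compose[OF measurable_snd measurable_bayes_softmax])
  ultimately have "(\<integral>\<omega>. (\<Sum>d=1..D. (snd \<omega> (fst \<omega>) d - bayes_softmax L D H ?kk ?b (snd \<omega>) d)\<^sup>2) \<partial>M) =
      (\<integral>\<omega>. (\<Sum>d=1..D. (snd \<omega> (fst \<omega>) d - ?cond_exp d \<omega>)\<^sup>2) \<partial>M)"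
    by (intro integral_cong_AE borel_measurable_sum borel_measurable_power borel_measurable_diff
        borel_measurable_cond_exp2)
  then show ?thesis
    unfolding M_def Let_def .
qed

end
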